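(* Let $n\ge2$ and $0<p<n$. Writing $x=(x',x_n)$ with $x'\in\mathbb R^{n-1}$, let $$\Omega=\{(x',x_n): |x'|<1,\ 0<x_n<1-|x'|^2\},\qquad w(x)=x_n-x_n^{\frac{2}{n+p}}(1-|x'|^2)^{\frac{n+p-2}{n+p}}.$$ Then: (i) $w$ is smooth and convex in $\Omega$, extends continuously to $\overline\Omega$, and $w=0$ on $\partial\Omega$; (ii) $\det D^2w\in L^1(\Omega)$; (iii) $w\notin C^{\alpha}(\overline{\Omega})$ for any $\alpha>\frac{2}{n+p}$. *)

theory Defs
  imports "HOL-Analysis.Analysis"
begin

definition partial_deriv :: "'n::finite \<Rightarrow> (real^'n \<Rightarrow> real) \<Rightarrow> real^'n \<Rightarrow> real" where
  "partial_deriv i f x = deriv (\<lambda>t. f (x + t *\<^sub>R axis i 1)) 0"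

fun iter_partial :: "'n::finite list \<Rightarrow> (real^'n \<Rightarrow> real) \<Rightarrow> real^'n \<Rightarrow> real" where
  "iter_partial [] f = f"
| "iter_partial (i # is) f = partial_deriv i (iter_partial is f)"

definition smooth_on :: "(real^'n::finite) set \<Rightarrow> (real^'n \<Rightarrow> real) \<Rightarrow> bool" where
  "smooth_on S f \<longleftrightarrow> open S \<and>
     (\<forall>is. continuous_on S (iter_partial is f) \<and>
        (\<forall>i. \<forall>x\<in>S. (\<lambda>t. iter_partial is f (x + t *\<^sub>R axis i 1)) differentiable (at 0)))"

definition hessian :: "(real^'n::finite \<Rightarrow> real) \<Rightarrow> real^'n \<Rightarrow> real^'n^'n" where
  "hessian f x = (\<chi> i j. partial_deriv i (partial_deriv j f) x)"

definition holder_on :: "real \<Rightarrow> (real^'n::finite) set \<Rightarrow> (real^'n \<Rightarrow> real) \<Rightarrow> bool" where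
  "holder_on \<alpha> S f \<longleftrightarrow> bounded (f ` S) \<and>
     (\<exists>C. \<forall>x\<in>S. \<forall>y\<in>S. \<bar>f x - f y\<bar> \<le> C * norm (x - y) powr \<alpha>)"

text \<open>Coordinates x = (x', x_n): the index k plays the role of the last coordinate x_n;
  |x'|^2 is the sum of squares of the remaining coordinates.\<close>
definition xprime_sq :: "'n::finite \<Rightarrow> real^'n \<Rightarrow> real" where
  "xprime_sq k x = (\<Sum>i\<in>UNIV - {k}. (x $ i)^2)"

definition Omega :: "'n::finite \<Rightarrow> (real^'n) set" where
  "Omega k = {x. xprime_sq k x < 1 \<and> 0 < x $ k \<and> x $ k < 1 - xprime_sq k x}"

definition wfun :: "'n::finite \<Rightarrow> real \<Rightarrow> real^'n \<Rightarrow> real" where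
  "wfun k p x = x $ k - (x $ k) powr (2 / (real CARD('n) + p))
       * (1 - xprime_sq k x) powr ((real CARD('n) + p - 2) / (real CARD('n) + p))"

end

theory Submission
  imports Defs
begin

text \<open>Write \<open>a = 2/(n+p)\<close>, \<open>b = 1 - a\<close> and \<open>Y = 1 - |x'|\<^sup>2\<close>. Then \<open>w = x\<^sub>n - x\<^sub>n\<^sup>a Y\<^sup>b\<close>,
  and the weighted geometric mean of the concave positive functions \<open>x\<^sub>n\<close> and \<open>Y\<close> is
  concave, so \<open>w\<close> is convex; \<open>w\<close> vanishes where \<open>x\<^sub>n = 0\<close> or \<open>x\<^sub>n = Y\<close>. The Hessian is a
  rank-one perturbation of a multiple of the identity in the \<open>x'\<close> block, and a Schur
  complement gives \<open>det D\<^sup>2w = a b (2b)\<^sup>n\<^sup>-\<^sup>1 x\<^sub>n\<^sup>r\<^sup>-\<^sup>1 Y\<^sup>-\<^sup>r\<close> with \<open>r = n a - 1 > 0\<close>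
  (this is where \<open>p < n\<close> enters); integrating in \<open>x\<^sub>n\<close> first gives \<open>1/r\<close> on every fibre.
  Finally \<open>w (t e\<^sub>n) = t - t\<^sup>a\<close> on the \<open>x\<^sub>n\<close>-axis, which is not \<open>C\<^sup>\<alpha>\<close> at \<open>0\<close> for \<open>\<alpha> > a\<close>.\<close>

lemma vec_add_axis_nth [simp]: "(x + t *\<^sub>R axis i 1) $ j = x $ j + (if j = i then t else 0)"
  by (simp add: axis_def)

lemma xprime_sq_add_axis_last: "xprime_sq k (x + t *\<^sub>R axis k 1) = xprime_sq k x"
  unfolding xprime_sq_def by (intro sum.cong) (auto simp: axis_def)

lemma xprime_sq_add_axis:
  assumes "i \<noteq> k"
  shows "xprime_sq k (x + t *\<^sub>R axis i 1) = xprime_sq k x + (2*t*x$i + t^2)"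
proof -
  have "xprime_sq k (x + t *\<^sub>R axis i 1) =
      (\<Sum>j\<in>UNIV-{k}. (x$j)^2 + (if j = i then 2*t*x$i + t^2 else 0))"
    unfolding xprime_sq_def by (intro sum.cong) (auto simp: axis_def power2_eq_square algebra_simps)
  also have "\<dots> = xprime_sq k x + (2*t*x$i + t^2)"
    using assms by (simp add: sum.distrib xprime_sq_def)
  finally show ?thesis .
qed

lemma continuous_on_xprime_sq: "continuous_on S (xprime_sq k)"
  unfolding xprime_sq_def by (intro continuous_intros)

lemma square_convex_comb:
  fixes u v l m :: real
  assumes "l \<ge> 0" "m \<ge> 0" "l + m = 1"
  shows "(l * u + m * v)^2 \<le> l * u^2 + m * v^2"
proof -
  have "l * u^2 + m * v^2 - (l * u + m * v)^2 = l * m * (u - v)^2"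
  proof -
    have m: "m = 1 - l" using assms(3) by simp
    show ?thesis unfolding m by (simp add: power2_eq_square algebra_simps)
  qed
  moreover have "l * m * (u - v)^2 \<ge> 0" using assms by simp
  ultimately show ?thesis by linarith
qed

lemma xprime_sq_convex_comb:
  assumes "l \<ge> 0" "m \<ge> 0" "l + m = 1"
  shows "xprime_sq k (l *\<^sub>R u + m *\<^sub>R v) \<le> l * xprime_sq k u + m * xprime_sq k v"
  unfolding xprime_sq_def sum_distrib_left sum.distrib[symmetric]
  by (intro sum_mono) (simp add: square_convex_comb[OF assms])

lemma Omega_pos: "x \<in> Omega k \<Longrightarrow> 0 < x $ k \<and> 0 < 1 - xprime_sq k x"
  unfolding Omega_def by auto

lemma open_Omega: "open (Omega k)"
proof -
  have "Omega k = {x. xprime_sq k x < 1} \<inter> {x. 0 < x $ k} \<inter> {x. x $ k < 1 - xprime_sq k x}"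
    unfolding Omega_def by auto
  moreover have "open {x::real^'a. xprime_sq k x < 1}"
    by (intro open_Collect_less continuous_on_xprime_sq continuous_intros)
  moreover have "open {x::real^'a. 0 < x $ k}"
    by (intro open_Collect_less continuous_intros)
  moreover have "open {x::real^'a. x $ k < 1 - xprime_sq k x}"
    by (intro open_Collect_less continuous_on_xprime_sq continuous_intros)
  ultimately show ?thesis by auto
qed

lemma convex_Omega: "convex (Omega k)"
  unfolding convex_def
proof (intro ballI allI impI)
  fix u v :: "real^'a" and l m :: real
  assume u: "u \<in> Omega k" and v: "v \<in> Omega k" and lm: "0 \<le> l" "0 \<le> m" "l + m = 1"
  define z where "z = l *\<^sub>R u + m *\<^sub>R v"
  have xz: "xprime_sq k z \<le> l * xprime_sq k u + m * xprime_sq k v"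
    unfolding z_def by (rule xprime_sq_convex_comb[OF lm])
  have zk: "z $ k = l * u$k + m * v$k" by (simp add: z_def)
  from u v have uu: "0 < u$k" "u$k < 1 - xprime_sq k u" and vv: "0 < v$k" "v$k < 1 - xprime_sq k v"
    by (auto simp: Omega_def)
  have pos: "0 < z $ k" unfolding zk using lm uu vv
    by (cases "l = 0") (auto intro: add_pos_nonneg add_nonneg_pos)
  have "l * u$k + m * v$k < l * (1 - xprime_sq k u) + m * (1 - xprime_sq k v)"
  proof (cases "l = 0")
    case True then show ?thesis using lm vv by simp
  next
    case False
    then have "l * u$k < l * (1 - xprime_sq k u)" using lm uu by simp
    moreover have "m * v$k \<le> m * (1 - xprime_sq k v)" using lm vv by (intro mult_left_mono) auto
    ultimately show ?thesis by linarith
  qed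
  then have "z $ k < 1 - xprime_sq k z" unfolding zk using xz lm by (simp add: algebra_simps)
  then show "l *\<^sub>R u + m *\<^sub>R v \<in> Omega k"
    using pos by (auto simp: Omega_def z_def[symmetric])
qed

definition Omega_closed :: "'n::finite \<Rightarrow> (real^'n) set" where
  "Omega_closed k = {x. 0 \<le> x $ k \<and> x $ k \<le> 1 - xprime_sq k x}"

lemma closure_Omega_subset: "closure (Omega k) \<subseteq> Omega_closed k"
proof (rule closure_minimal)
  show "Omega k \<subseteq> Omega_closed k" by (auto simp: Omega_def Omega_closed_def)
  have "Omega_closed k = {x. 0 \<le> x $ k} \<inter> {x. x $ k \<le> 1 - xprime_sq k x}"
    by (auto simp: Omega_closed_def)
  moreover have "closed {x::real^'a. 0 \<le> x $ k}"
    by (intro closed_Collect_le continuous_intros)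
  moreover have "closed {x::real^'a. x $ k \<le> 1 - xprime_sq k x}"
    by (intro closed_Collect_le continuous_intros continuous_on_xprime_sq)
  ultimately show "closed (Omega_closed k)" by auto
qed

text \<open>Terms built from constants, coordinates and the monomials \<open>x\<^sub>k\<^sup>c (1 - |x'|\<^sup>2)\<^sup>d\<close> by
  sums and products. This class is closed under partial differentiation on \<open>Omega k\<close>,
  which is how smoothness of \<open>w\<close> is obtained.\<close>

datatype 'n pexpr = PConst real | PCoord 'n | PMonom real real
  | PAdd "'n pexpr" "'n pexpr" | PMult "'n pexpr" "'n pexpr"

fun pexpr_eval :: "'n::finite \<Rightarrow> 'n pexpr \<Rightarrow> real^'n \<Rightarrow> real" where
  "pexpr_eval k (PConst c) x = c"
| "pexpr_eval k (PCoord i) x = x $ i"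
| "pexpr_eval k (PMonom c d) x = (x $ k) powr c * (1 - xprime_sq k x) powr d"
| "pexpr_eval k (PAdd e f) x = pexpr_eval k e x + pexpr_eval k f x"
| "pexpr_eval k (PMult e f) x = pexpr_eval k e x * pexpr_eval k f x"

fun pexpr_diff :: "'n::finite \<Rightarrow> 'n \<Rightarrow> 'n pexpr \<Rightarrow> 'n pexpr" where
  "pexpr_diff k i (PConst c) = PConst 0"
| "pexpr_diff k i (PCoord j) = PConst (if i = j then 1 else 0)"
| "pexpr_diff k i (PMonom c d) = (if i = k then PMult (PConst c) (PMonom (c - 1) d)
      else PMult (PConst (-2*d)) (PMult (PCoord i) (PMonom c (d - 1))))"
| "pexpr_diff k i (PAdd e f) = PAdd (pexpr_diff k i e) (pexpr_diff k i f)"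
| "pexpr_diff k i (PMult e f) = PAdd (PMult (pexpr_diff k i e) f) (PMult e (pexpr_diff k i f))"

fun pexpr_diffs :: "'n::finite \<Rightarrow> 'n list \<Rightarrow> 'n pexpr \<Rightarrow> 'n pexpr" where
  "pexpr_diffs k [] e = e"
| "pexpr_diffs k (i # is) e = pexpr_diff k i (pexpr_diffs k is e)"

lemma has_real_derivative_pexpr_eval_line:
  assumes x: "x \<in> Omega k"
  shows "((\<lambda>t. pexpr_eval k e (x + t *\<^sub>R axis i 1)) has_real_derivative
           pexpr_eval k (pexpr_diff k i e) x) (at 0)"
proof (induction e)
  case (PCoord j) then show ?case
    by (auto simp: axis_def intro!: derivative_eq_intros)
next
  case (PMonom c d)
  from Omega_pos[OF x] have pos: "0 < x $ k" "0 < 1 - xprime_sq k x" by auto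
  show ?case
  proof (cases "i = k")
    case True
    have "((\<lambda>t. (x $ k + t) powr c * (1 - xprime_sq k x) powr d) has_real_derivative
        c * (x$k) powr (c-1) * (1 - xprime_sq k x) powr d) (at 0)"
      using pos by (auto intro!: derivative_eq_intros)
    then show ?thesis using True by (simp add: xprime_sq_add_axis_last mult.assoc)
  next
    case False
    have "((\<lambda>t. (x $ k) powr c * (1 - (xprime_sq k x + (2*t*x$i + t^2))) powr d) has_real_derivative
        (-2*d) * (x$i * ((x$k) powr c * (1 - xprime_sq k x) powr (d-1)))) (at 0)"
      using pos by (auto intro!: derivative_eq_intros)
    then show ?thesis
      using False by (simp add: xprime_sq_add_axis del: vector_add_component vector_scaleR_component)
  qed
qed (auto intro!: derivative_eq_intros)

lemma eventually_line_in_open: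
  fixes x :: "real^'n::finite"
  assumes "open S" "x \<in> S"
  shows "eventually (\<lambda>t. x + t *\<^sub>R axis i 1 \<in> S) (nhds (0::real))"
proof -
  have "isCont (\<lambda>t::real. x + t *\<^sub>R axis i 1) 0" by (auto intro!: continuous_intros)
  then show ?thesis
    using assms unfolding isCont_def tendsto_def by (simp add: eventually_nhds_conv_at)
qed

lemma partial_deriv_cong_open:
  assumes "open S" "x \<in> S" "\<And>y. y \<in> S \<Longrightarrow> f y = g y"
  shows "partial_deriv i f x = partial_deriv i g x"
  unfolding partial_deriv_def
  by (rule deriv_cong_ev[OF eventually_mono[OF eventually_line_in_open[OF assms(1,2), of i]]])
     (auto simp: assms(3))

lemma iter_partial_pexpr_eval:
  "x \<in> Omega k \<Longrightarrow> iter_partial is (pexpr_eval k e) x = pexpr_eval k (pexpr_diffs k is e) x"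
proof (induction "is" arbitrary: x)
  case (Cons i "is")
  have "iter_partial (i # is) (pexpr_eval k e) x = partial_deriv i (iter_partial is (pexpr_eval k e)) x"
    by simp
  also have "\<dots> = partial_deriv i (pexpr_eval k (pexpr_diffs k is e)) x"
    by (rule partial_deriv_cong_open[OF open_Omega Cons.prems]) (simp add: Cons.IH)
  also have "\<dots> = pexpr_eval k (pexpr_diff k i (pexpr_diffs k is e)) x"
    unfolding partial_deriv_def
    using has_real_derivative_pexpr_eval_line[OF Cons.prems] by (rule DERIV_imp_deriv)
  finally show ?case by simp
qed simp

lemma continuous_on_pexpr_eval: "continuous_on (Omega k) (pexpr_eval k e)"
proof (induction e)
  case (PMonom c d)
  have "continuous_on (Omega k) (\<lambda>x. (x $ k) powr c * (1 - xprime_sq k x) powr d)"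
    by (intro continuous_intros continuous_on_xprime_sq) (auto simp: Omega_def)
  then show ?case by simp
qed (auto intro!: continuous_intros)

lemma smooth_on_pexpr_eval: "smooth_on (Omega k) (pexpr_eval k e)"
  unfolding smooth_on_def
proof (intro conjI allI ballI open_Omega)
  fix "is" :: "'a list"
  show "continuous_on (Omega k) (iter_partial is (pexpr_eval k e))"
    using continuous_on_pexpr_eval[of k "pexpr_diffs k is e"]
    by (rule continuous_on_cong[THEN iffD1, rotated 2]) (auto simp: iter_partial_pexpr_eval)
next
  fix "is" :: "'a list" and i x assume x: "x \<in> Omega k"
  have "((\<lambda>t. iter_partial is (pexpr_eval k e) (x + t *\<^sub>R axis i 1)) has_real_derivative
      pexpr_eval k (pexpr_diff k i (pexpr_diffs k is e)) x) (at 0)"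
    using has_real_derivative_pexpr_eval_line[OF x, of "pexpr_diffs k is e" i]
    by (rule DERIV_cong_ev[THEN iffD1, rotated 3])
       (auto intro!: eventually_mono[OF eventually_line_in_open[OF open_Omega x, of i]]
             simp: iter_partial_pexpr_eval)
  then show "(\<lambda>t. iter_partial is (pexpr_eval k e) (x + t *\<^sub>R axis i 1)) differentiable (at 0)"
    using real_differentiable_def by blast
qed

lemma hessian_pexpr_eval:
  "x \<in> Omega k \<Longrightarrow> hessian (pexpr_eval k e) x $ i $ j = pexpr_eval k (pexpr_diff k i (pexpr_diff k j e)) x"
  using iter_partial_pexpr_eval[of x k "[i, j]" e] by (simp add: hessian_def)

lemma det_diagonal_but_row:
  fixes A :: "real^'n::finite^'n"
  assumes off: "\<And>i j. i \<noteq> k \<Longrightarrow> i \<noteq> j \<Longrightarrow> A$i$j = 0"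
  shows "det A = (\<Prod>i\<in>UNIV. A$i$i)"
proof -
  let ?pp = "\<lambda>p. of_int (sign p) * (\<Prod>i\<in>UNIV. A$i$p i)"
  have "?pp p = 0" if p: "p permutes UNIV" "p \<noteq> id" for p
  proof -
    obtain j where j: "p j \<noteq> j" using p(2) by fastforce
    have "inj p" using p(1) permutes_inj by blast
    then obtain i where "i \<noteq> k" "p i \<noteq> i"
      using j by (cases "j = k") (metis injD, blast)
    then have "A$i$p i = 0" by (intro off) auto
    then have "(\<Prod>i\<in>UNIV. A$i$p i) = 0" by (intro prod_zero) auto
    then show ?thesis by simp
  qed
  then have "(\<Sum>p\<in>{p. p permutes UNIV}. ?pp p) = (\<Sum>p\<in>{id}. ?pp p)"
    by (intro sum.mono_neutral_right) (auto simp: finite_permutations permutes_id)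
  then show ?thesis unfolding det_def by (simp add: sign_id)
qed

lemma det_diagonal_but_column:
  fixes A :: "real^'n::finite^'n"
  assumes "\<And>i j. j \<noteq> k \<Longrightarrow> i \<noteq> j \<Longrightarrow> A$i$j = 0"
  shows "det A = (\<Prod>i\<in>UNIV. A$i$i)"
proof -
  have "det (transpose A) = (\<Prod>i\<in>UNIV. transpose A$i$i)"
    by (rule det_diagonal_but_row[of k]) (simp add: transpose_def assms)
  then show ?thesis by (simp only: det_transpose) (simp add: transpose_def)
qed

text \<open>If the block of \<open>M\<close> off row and column \<open>k\<close> agrees with the rank-one matrix
  \<open>M\<^sub>i\<^sub>k M\<^sub>k\<^sub>j / M\<^sub>k\<^sub>k\<close> away from the diagonal, the Schur complement of \<open>M\<^sub>k\<^sub>k\<close> is diagonal.\<close>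

lemma det_schur_rank_one:
  fixes M :: "real^'n::finite^'n"
  assumes kk: "M$k$k \<noteq> 0"
    and off: "\<And>i j. i \<noteq> k \<Longrightarrow> j \<noteq> k \<Longrightarrow> i \<noteq> j \<Longrightarrow> M$i$j = M$i$k * M$k$j / M$k$k"
  shows "det M = M$k$k * (\<Prod>i\<in>UNIV-{k}. M$i$i - M$i$k * M$k$i / M$k$k)"
proof -
  define E :: "real^'n^'n" where
    "E = (\<chi> i j. if i = j then 1 else if j = k then -(M$i$k / M$k$k) else 0)"
  have dE: "det E = 1"
    by (subst det_diagonal_but_column[of k]) (auto simp: E_def)
  define N where "N = E ** M"
  have Nij: "N$i$j = M$i$j - (if i \<noteq> k then M$i$k / M$k$k * M$k$j else 0)" for i j
  proof -
    have "N$i$j = (\<Sum>l\<in>UNIV. E$i$l * M$l$j)" by (simp add: N_def matrix_matrix_mult_def)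
    also have "\<dots> = (\<Sum>l\<in>UNIV. (if l = i then M$i$j else 0) +
        (if l = k \<and> i \<noteq> k then -(M$i$k / M$k$k) * M$k$j else 0))"
      by (intro sum.cong refl) (simp add: E_def)
    finally show ?thesis
      unfolding sum.distrib by (simp add: if_distrib cong: if_cong)
  qed
  have "det M = det N" by (simp add: N_def det_mul dE)
  also have "\<dots> = (\<Prod>i\<in>UNIV. N$i$i)"
  proof (rule det_diagonal_but_row[of k])
    fix i j :: 'n assume "i \<noteq> k" "i \<noteq> j"
    then show "N$i$j = 0" using kk off[of i j] by (cases "j = k") (auto simp: Nij)
  qed
  also have "\<dots> = N$k$k * (\<Prod>i\<in>UNIV-{k}. N$i$i)"
    by (rule prod.remove) auto
  also have "(\<Prod>i\<in>UNIV-{k}. N$i$i) = (\<Prod>i\<in>UNIV-{k}. M$i$i - M$i$k * M$k$i / M$k$k)"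
    by (intro prod.cong) (auto simp: Nij)
  finally show ?thesis by (simp add: Nij)
qed

definition wfun_ab :: "'n::finite \<Rightarrow> real \<Rightarrow> real \<Rightarrow> real^'n \<Rightarrow> real" where
  "wfun_ab k a b x = x $ k - (x $ k) powr a * (1 - xprime_sq k x) powr b"

lemma wfun_ab_pexpr:
  "wfun_ab k a b = pexpr_eval k (PAdd (PCoord k) (PMult (PConst (-1)) (PMonom a b)))"
  by (simp add: wfun_ab_def fun_eq_iff)

lemma smooth_on_wfun_ab: "smooth_on (Omega k) (wfun_ab k a b)"
  unfolding wfun_ab_pexpr by (rule smooth_on_pexpr_eval)

lemma powr_mult_self_divide:
  fixes T :: real assumes "T > 0"
  shows "T powr c * T powr c / T powr d = T powr (2*c - d)"
proof -
  have "T powr (2*c - d) = T powr ((c + c) - d)" by (rule arg_cong[where f="\<lambda>z. T powr z"]) simp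
  also have "\<dots> = T powr (c + c) / T powr d" by (rule powr_diff)
  also have "\<dots> = T powr c * T powr c / T powr d" by (simp only: powr_add)
  finally show ?thesis by simp
qed

lemma det_hessian_wfun_ab_prod:
  fixes x :: "real^'n::finite"
  assumes x: "x \<in> Omega k" and a: "0 < a" "a < 1" and ab: "a + b = 1"
  shows "det (hessian (wfun_ab k a b) x) =
     (a * b * (x$k) powr (a-2) * (1 - xprime_sq k x) powr b) *
     (2 * b * (x$k) powr a * (1 - xprime_sq k x) powr (b-1)) ^ (CARD('n) - 1)"
proof -
  define M where "M = hessian (wfun_ab k a b) x"
  define T where "T = x $ k"
  define Y where "Y = 1 - xprime_sq k x"
  have T: "T > 0" and Y: "Y > 0" using Omega_pos[OF x] by (auto simp: T_def Y_def)
  have b: "b = 1 - a" using ab by simp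
  note M_eq = M_def wfun_ab_pexpr hessian_pexpr_eval[OF x]
  have Mkk: "M$k$k = a * b * T powr (a-2) * Y powr b"
    unfolding M_eq by (simp add: T_def Y_def b algebra_simps)
  have Mik: "M$i$k = 2*a*b * x$i * T powr (a-1) * Y powr (b-1)"
    and Mki: "M$k$i = 2*a*b * x$i * T powr (a-1) * Y powr (b-1)" if "i \<noteq> k" for i
    unfolding M_eq using that by (simp_all add: T_def Y_def algebra_simps)
  have Mij: "M$i$j = 2*b*(if i = j then 1 else 0) * T powr a * Y powr (b-1)
       + 2*b*(2-2*b) * x$i * x$j * T powr a * Y powr (b-2)" if "i \<noteq> k" "j \<noteq> k" for i j
    unfolding M_eq using that by (auto simp: T_def Y_def algebra_simps)
  have nz: "M$k$k \<noteq> 0" using T Y a b by (simp add: Mkk)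
  have rank_one: "M$i$k * M$k$j / M$k$k = 2*b*(2-2*b) * x$i * x$j * T powr a * Y powr (b-2)"
    if "i \<noteq> k" "j \<noteq> k" for i j
  proof -
    have "M$i$k * M$k$j / M$k$k = (4*a*b * x$i * x$j) * (T powr (a-1) * T powr (a-1) / T powr (a-2))
         * (Y powr (b-1) * Y powr (b-1) / Y powr b)"
      using that a b T Y by (simp add: Mik Mki Mkk field_simps)
    also have "\<dots> = (4*a*b * x$i * x$j) * T powr a * Y powr (b-2)"
      using T Y by (simp add: powr_mult_self_divide algebra_simps)
    finally show ?thesis using ab by (simp add: b algebra_simps)
  qed
  have "det M = M$k$k * (\<Prod>i\<in>UNIV-{k}. M$i$i - M$i$k * M$k$i / M$k$k)"
    by (rule det_schur_rank_one[OF nz]) (simp add: Mij rank_one)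
  also have "(\<Prod>i\<in>UNIV-{k}. M$i$i - M$i$k * M$k$i / M$k$k) =
      (\<Prod>i\<in>UNIV-{k}. 2 * b * T powr a * Y powr (b-1))"
    by (intro prod.cong refl) (simp add: Mij rank_one)
  also have "\<dots> = (2 * b * T powr a * Y powr (b-1)) ^ (CARD('n) - 1)"
    by (simp add: card_Diff_singleton)
  finally show ?thesis unfolding Mkk by (simp add: M_def T_def Y_def)
qed

lemma det_hessian_wfun_ab:
  fixes x :: "real^'n::finite"
  assumes x: "x \<in> Omega k" and a: "0 < a" "a < 1" and ab: "a + b = 1"
  defines "r \<equiv> real CARD('n) * a - 1"
  shows "det (hessian (wfun_ab k a b) x) =
     a * b * (2*b)^(CARD('n) - 1) * ((x$k) powr (r-1) * (1 - xprime_sq k x) powr (-r))"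
proof -
  define m where "m = CARD('n) - 1"
  define T where "T = x $ k"
  define Y where "Y = 1 - xprime_sq k x"
  have T: "T > 0" and Y: "Y > 0" using Omega_pos[OF x] by (auto simp: T_def Y_def)
  have m: "real m = real CARD('n) - 1" by (simp add: m_def of_nat_diff)
  have b: "b = 1 - a" using ab by simp
  have e1: "a - 2 + real m * a = r - 1"
    unfolding m r_def by (simp add: algebra_simps)
  have e2: "b + real m * (b-1) = -r"
    unfolding b m r_def by (simp add: algebra_simps)
  have "det (hessian (wfun_ab k a b) x) =
      (a * b * T powr (a-2) * Y powr b) * (2 * b * T powr a * Y powr (b-1)) ^ m"
    unfolding det_hessian_wfun_ab_prod[OF x a ab] by (simp add: T_def Y_def m_def)
  also have "\<dots> = a * b * (2*b)^m * ((T powr (a-2) * T powr (real m * a)) * (Y powr b * Y powr (real m * (b-1))))"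
    using T Y by (simp add: power_mult_distrib powr_power)
  also have "\<dots> = a * b * (2*b)^m * (T powr (r-1) * Y powr (-r))"
    by (simp only: powr_add[symmetric] e1 e2)
  finally show ?thesis by (simp add: m_def T_def Y_def)
qed

lemma vec_nth_sum_Basis: "(\<Sum>b\<in>Basis. h b *\<^sub>R b :: real^'n::finite) $ j = h (axis j 1)"
proof -
  have "(\<Sum>b\<in>Basis. h b *\<^sub>R b :: real^'n::finite) $ j = (\<Sum>b\<in>Basis. h b * (b \<bullet> axis j 1))"
    by (simp add: cart_eq_inner_axis inner_sum_left)
  also have "\<dots> = h (axis j 1)"
    by (subst sum.mono_neutral_right[of Basis "{axis j 1}"]) (auto simp: inner_Basis axis_in_Basis_iff)
  finally show ?thesis .
qed

lemma nn_integral_lborel_vec_split: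
  fixes f :: "real^'n::finite \<Rightarrow> ennreal"
  assumes f: "f \<in> borel_measurable borel"
  shows "(\<integral>\<^sup>+x. f x \<partial>lborel) =
    (\<integral>\<^sup>+g. (\<integral>\<^sup>+s. f (\<Sum>b\<in>Basis. (g(axis k 1 := s)) b *\<^sub>R b) \<partial>lborel)
       \<partial>PiM (Basis - {axis k 1}) (\<lambda>_. lborel))"
proof -
  define e :: "real^'n" where "e = axis k 1"
  define B' where "B' = (Basis :: (real^'n) set) - {e}"
  have BB: "Basis = insert e B'" by (auto simp: B'_def e_def axis_in_Basis_iff)
  have B': "finite B'" "e \<notin> B'" by (auto simp: B'_def)
  interpret product_sigma_finite "\<lambda>_. lborel :: real measure" by standard
  have sum_meas: "(\<lambda>g. \<Sum>b\<in>Basis. g b *\<^sub>R b :: real^'n) \<in> measurable (PiM Basis (\<lambda>_. lborel)) borel"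
    by measurable
  have fm: "(\<lambda>g. f (\<Sum>b\<in>Basis. g b *\<^sub>R b)) \<in> borel_measurable (PiM Basis (\<lambda>_. lborel))"
    using measurable_compose[OF sum_meas f] .
  have "(\<integral>\<^sup>+x. f x \<partial>lborel) = (\<integral>\<^sup>+g. f (\<Sum>b\<in>Basis. g b *\<^sub>R b) \<partial>PiM Basis (\<lambda>_. lborel))"
    by (subst lborel_eq) (simp add: nn_integral_distr sum_meas f)
  also have "\<dots> = (\<integral>\<^sup>+g. (\<integral>\<^sup>+s. f (\<Sum>b\<in>Basis. (g(e := s)) b *\<^sub>R b) \<partial>lborel)
       \<partial>PiM B' (\<lambda>_. lborel))"
    unfolding BB using B' fm by (subst product_nn_integral_insert) (simp_all add: BB[symmetric])
  finally show ?thesis by (simp add: e_def B'_def)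
qed

lemma nn_integral_powr_interval:
  fixes r Y :: real assumes "r > 0" "Y > 0"
  shows "(\<integral>\<^sup>+s. ennreal (s powr (r-1)) * indicator {0..Y} s \<partial>lborel) = ennreal (Y powr r / r)"
  using nn_integral_has_integral_lebesgue'[OF _ has_integral_powr_from_0[of "r-1" Y]] assms by simp

lemma nn_integral_fibre_le:
  fixes q r :: real assumes r: "r > 0" and q: "q < 1"
  shows "(\<integral>\<^sup>+s. ennreal (if 0 < s \<and> s < 1 - q then s powr (r-1) * (1-q) powr (-r) else 0) \<partial>lborel)
    \<le> ennreal (1/r)"
proof -
  have "(\<integral>\<^sup>+s. ennreal (if 0 < s \<and> s < 1 - q then s powr (r-1) * (1-q) powr (-r) else 0) \<partial>lborel) \<le>
      (\<integral>\<^sup>+s. ennreal ((1-q) powr (-r)) * (ennreal (s powr (r-1)) * indicator {0..1-q} s) \<partial>lborel)"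
    by (intro nn_integral_mono) (auto simp: indicator_def ennreal_mult[symmetric] mult.commute)
  also have "\<dots> = ennreal ((1-q) powr (-r)) * ennreal ((1-q) powr r / r)"
    using q r by (subst nn_integral_cmult) (auto simp: nn_integral_powr_interval)
  also have "\<dots> = ennreal (1/r)"
    using q r by (simp add: ennreal_mult[symmetric] powr_minus field_simps)
  finally show ?thesis .
qed

text \<open>Each fibre in the \<open>x\<^sub>k\<close>-direction contributes at most \<open>1/r\<close>, and the fibres are
  nonempty only over the cube \<open>[-1, 1]\<^sup>n\<^sup>-\<^sup>1\<close>.\<close>

lemma integrable_Omega_powr_weight:
  fixes k :: "'n::finite" and r :: real
  assumes r: "r > 0"
  shows "integrable lborel
    (\<lambda>x::real^'n. indicator (Omega k) x * ((x$k) powr (r-1) * (1 - xprime_sq k x) powr (-r)))"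
    (is "integrable lborel ?F")
proof -
  have "continuous_on (Omega k) (\<lambda>x::real^'n. (x$k) powr (r-1) * (1 - xprime_sq k x) powr (-r))"
    by (intro continuous_intros continuous_on_xprime_sq) (auto simp: Omega_def)
  from borel_measurable_continuous_on_indicator[OF borel_open[OF open_Omega] this]
  have Fm: "?F \<in> borel_measurable borel" by simp
  define B' where "B' = (Basis :: (real^'n) set) - {axis k 1}"
  let ?cube = "\<lambda>g. \<Prod>b\<in>B'. indicator {-1..1::real} (g b) :: ennreal"
  have "(\<integral>\<^sup>+x. ennreal (?F x) \<partial>lborel) =
      (\<integral>\<^sup>+g. (\<integral>\<^sup>+s. ennreal (?F (\<Sum>b\<in>Basis. (g(axis k 1 := s)) b *\<^sub>R b)) \<partial>lborel) \<partial>PiM B' (\<lambda>_. lborel))"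
    unfolding B'_def using Fm by (intro nn_integral_lborel_vec_split) simp
  also have "\<dots> \<le> (\<integral>\<^sup>+g. ennreal (1/r) * ?cube g \<partial>PiM B' (\<lambda>_. lborel))"
  proof (rule nn_integral_mono)
    fix g :: "real^'n \<Rightarrow> real"
    define q where "q = (\<Sum>j\<in>UNIV-{k}. (g (axis j 1))^2)"
    define V where "V = (\<lambda>s. (\<Sum>b\<in>Basis. (g(axis k 1 := s)) b *\<^sub>R b) :: real^'n)"
    have V: "V s $ j = (if j = k then s else g (axis j 1))" for s j
      unfolding V_def vec_nth_sum_Basis by (auto simp: axis_eq_axis)
    have "xprime_sq k (V s) = q" for s
      unfolding xprime_sq_def q_def by (intro sum.cong) (auto simp: V)
    then have FV: "?F (V s) = (if q < 1 \<and> 0 < s \<and> s < 1 - q then s powr (r-1) * (1-q) powr (-r) else 0)"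
      for s by (auto simp: Omega_def V)
    show "(\<integral>\<^sup>+s. ennreal (?F (V s)) \<partial>lborel) \<le> ennreal (1/r) * ?cube g"
      unfolding V_def[symmetric]
    proof (cases "q < 1")
      case False
      then show ?thesis by (simp add: FV)
    next
      case True
      have "?cube g = 1"
      proof (intro prod.neutral ballI)
        fix b assume "b \<in> B'"
        then obtain j where j: "j \<noteq> k" "b = axis j 1"
          by (auto simp: B'_def Basis_vec_def) metis
        have "(g b)^2 \<le> q" unfolding q_def j
          by (rule member_le_sum) (use j in auto)
        then have "\<bar>g b\<bar> \<le> 1" using True abs_square_le_1 by fastforce
        then show "indicator {-1..1::real} (g b) = (1::ennreal)" by (auto simp: indicator_def)
      qed
      then show ?thesis using nn_integral_fibre_le[OF r True] by (simp add: FV True)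
    qed
  qed
  also have "\<dots> = ennreal (1/r) * 2 ^ card B'"
  proof -
    interpret product_sigma_finite "\<lambda>_. lborel :: real measure" by standard
    have "(\<integral>\<^sup>+g. ?cube g \<partial>PiM B' (\<lambda>_. lborel)) = (\<Prod>b\<in>B'. \<integral>\<^sup>+y. indicator {-1..1::real} y \<partial>lborel)"
      using product_nn_integral_prod[of B' "\<lambda>_. indicator {-1..1::real}"] by (simp add: B'_def)
    then show ?thesis by (subst nn_integral_cmult) auto
  qed
  also have "\<dots> < \<infinity>"
    by (simp add: ennreal_mult_less_top power_less_top_ennreal)
  finally show ?thesis
    by (intro integrableI_nonneg) (use Fm in auto)
qed

lemma absolutely_integrable_det_hessian_wfun_ab:
  fixes k :: "'n::finite"
  assumes a: "0 < a" "a < 1" and ab: "a + b = 1" and na: "real CARD('n) * a > 1"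
  shows "(\<lambda>x. det (hessian (wfun_ab k a b) x)) absolutely_integrable_on Omega k"
proof -
  define r where "r = real CARD('n) * a - 1"
  define K where "K = a * b * (2*b)^(CARD('n) - 1)"
  have "integrable lborel
      (\<lambda>x::real^'n. K * (indicator (Omega k) x * ((x$k) powr (r-1) * (1 - xprime_sq k x) powr (-r))))"
    using na by (intro integrable_mult_right integrable_Omega_powr_weight) (simp add: r_def)
  moreover have "(\<lambda>x. indicator (Omega k) x *\<^sub>R det (hessian (wfun_ab k a b) x)) =
      (\<lambda>x::real^'n. K * (indicator (Omega k) x * ((x$k) powr (r-1) * (1 - xprime_sq k x) powr (-r))))"
    by (auto simp: fun_eq_iff indicator_def det_hessian_wfun_ab[OF _ a ab] K_def r_def)
  ultimately show ?thesis
    unfolding set_integrable_def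
    using integrable_completion borel_measurable_integrable by metis
qed

text \<open>Weighted AM-GM (Young) applied to \<open>c/S\<close> and \<open>y/Y\<close>, where \<open>S\<close> and \<open>Y\<close> are the
  convex combinations.\<close>

lemma powr_mult_powr_concave:
  fixes a b c1 c2 y1 y2 l m :: real
  assumes a: "a \<ge> 0" "b \<ge> 0" "a + b = 1" and s: "c1 > 0" "c2 > 0" "y1 > 0" "y2 > 0"
    and l: "l \<ge> 0" "m \<ge> 0" "l + m = 1"
  shows "l * (c1 powr a * y1 powr b) + m * (c2 powr a * y2 powr b)
       \<le> (l * c1 + m * c2) powr a * (l * y1 + m * y2) powr b"
proof -
  define S where "S = l * c1 + m * c2"
  define Y where "Y = l * y1 + m * y2"
  have S: "S > 0" unfolding S_def using s l
    by (cases "l = 0") (auto intro: add_pos_nonneg add_nonneg_pos)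
  have Y: "Y > 0" unfolding Y_def using s l
    by (cases "l = 0") (auto intro: add_pos_nonneg add_nonneg_pos)
  have young: "s powr a * y powr b \<le> S powr a * Y powr b * (a * (s/S) + b * (y/Y))"
    if "s > 0" "y > 0" for s y
  proof -
    have "(s/S) powr a * (y/Y) powr b \<le> a * (s/S) + b * (y/Y)"
      by (rule Youngs_inequality_0) (use a that S Y in auto)
    then have "S powr a * Y powr b * ((s/S) powr a * (y/Y) powr b)
        \<le> S powr a * Y powr b * (a * (s/S) + b * (y/Y))"
      by (intro mult_left_mono) auto
    moreover have "S powr a * Y powr b * ((s/S) powr a * (y/Y) powr b) = s powr a * y powr b"
      using S Y by (simp add: powr_divide field_simps)
    ultimately show ?thesis by simp
  qed
  have "l * (c1 powr a * y1 powr b) + m * (c2 powr a * y2 powr b) \<le>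
      l * (S powr a * Y powr b * (a * (c1/S) + b * (y1/Y)))
      + m * (S powr a * Y powr b * (a * (c2/S) + b * (y2/Y)))"
    by (intro add_mono mult_left_mono young) (use s l in auto)
  also have "\<dots> = S powr a * Y powr b * (a * ((l * c1 + m * c2)/S) + b * ((l * y1 + m * y2)/Y))"
    by (simp add: add_divide_distrib algebra_simps)
  also have "\<dots> = S powr a * Y powr b" using S Y a by (simp add: S_def[symmetric] Y_def[symmetric])
  finally show ?thesis by (simp add: S_def Y_def)
qed

lemma convex_on_wfun_ab:
  assumes a: "0 < a" "0 < b" "a + b = 1"
  shows "convex_on (Omega k) (wfun_ab k a b)"
  unfolding convex_on_def
proof (intro conjI convex_Omega ballI allI impI)
  fix u v :: "real^'a" and l m :: real
  assume u: "u \<in> Omega k" and v: "v \<in> Omega k" and lm: "0 \<le> l" "0 \<le> m" "l + m = 1"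
  define z where "z = l *\<^sub>R u + m *\<^sub>R v"
  have zk: "z $ k = l * u$k + m * v$k" by (simp add: z_def)
  from u v have uu: "0 < u$k" "0 < 1 - xprime_sq k u" and vv: "0 < v$k" "0 < 1 - xprime_sq k v"
    by (auto simp: Omega_def)
  have Yz: "l * (1 - xprime_sq k u) + m * (1 - xprime_sq k v) \<le> 1 - xprime_sq k z"
    using xprime_sq_convex_comb[OF lm, of k u v] lm by (simp add: z_def algebra_simps)
  have "l * ((u$k) powr a * (1 - xprime_sq k u) powr b) + m * ((v$k) powr a * (1 - xprime_sq k v) powr b)
      \<le> (l * u$k + m * v$k) powr a * (l * (1 - xprime_sq k u) + m * (1 - xprime_sq k v)) powr b"
    by (rule powr_mult_powr_concave) (use a uu vv lm in auto)
  also have "\<dots> \<le> (z$k) powr a * (1 - xprime_sq k z) powr b"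
    unfolding zk using a lm uu vv Yz
    by (intro mult_left_mono powr_mono2) (auto intro: add_nonneg_nonneg)
  finally show "wfun_ab k a b (l *\<^sub>R u + m *\<^sub>R v) \<le> l * wfun_ab k a b u + m * wfun_ab k a b v"
    using zk lm unfolding wfun_ab_def z_def[symmetric] by (simp add: algebra_simps)
qed

lemma continuous_on_closure_wfun_ab:
  assumes "0 < a" "0 < b"
  shows "continuous_on (closure (Omega k)) (wfun_ab k a b)"
proof (rule continuous_on_subset[OF _ closure_Omega_subset])
  show "continuous_on (Omega_closed k) (wfun_ab k a b)"
    unfolding wfun_ab_def
    by (intro continuous_intros continuous_on_powr' continuous_on_xprime_sq)
       (use assms in \<open>auto simp: Omega_closed_def\<close>)
qed

lemma wfun_ab_frontier:
  assumes a: "0 < a" "0 < b" "a + b = 1" and x: "x \<in> frontier (Omega k)"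
  shows "wfun_ab k a b x = 0"
proof -
  have "x \<in> Omega_closed k" "x \<notin> Omega k"
    using x closure_Omega_subset[of k] interior_open[OF open_Omega[of k]]
    by (auto simp: frontier_def)
  then have "x $ k = 0 \<or> x $ k = 1 - xprime_sq k x \<and> x $ k > 0"
    by (auto simp: Omega_closed_def Omega_def)
  then show ?thesis
  proof
    assume e: "x $ k = 1 - xprime_sq k x \<and> x $ k > 0"
    then have "(x$k) powr a * (x$k) powr b = x$k"
      using a by (simp add: powr_add[symmetric])
    then show ?thesis using e by (simp add: wfun_ab_def)
  qed (use a in \<open>simp add: wfun_ab_def\<close>)
qed

text \<open>On the \<open>x\<^sub>k\<close>-axis \<open>w(t e\<^sub>k) - w(0) = t - t\<^sup>a\<close>, whereas \<open>C t\<^sup>\<alpha> + t = o(t\<^sup>a)\<close>.\<close>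

lemma not_holder_wfun_ab:
  fixes k :: "'n::finite"
  assumes a: "0 < a" "a < 1" and al: "a < \<alpha>"
  shows "\<not> holder_on \<alpha> (closure (Omega k)) (wfun_ab k a b)"
proof
  assume "holder_on \<alpha> (closure (Omega k)) (wfun_ab k a b)"
  then obtain C where C: "\<And>x y. x \<in> closure (Omega k) \<Longrightarrow> y \<in> closure (Omega k) \<Longrightarrow>
      \<bar>wfun_ab k a b x - wfun_ab k a b y\<bar> \<le> C * norm (x - y) powr \<alpha>"
    unfolding holder_on_def by blast
  define P where "P = (\<lambda>t::real. t *\<^sub>R (axis k 1 :: real^'n))"
  have xP: "xprime_sq k (P t) = 0" for t
    unfolding xprime_sq_def P_def by (intro sum.neutral) (auto simp: axis_def)
  have PO: "P t \<in> Omega k" if "0 < t" "t < 1" for t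
    using that by (simp add: Omega_def xP) (simp add: P_def)
  have wP: "wfun_ab k a b (P t) = t - t powr a" for t unfolding wfun_ab_def xP by (simp add: P_def)
  have w0: "wfun_ab k a b 0 = 0" using a by (simp add: wfun_ab_def)
  have "0 \<in> closure (Omega k)"
    unfolding closure_approachable
  proof (intro allI impI)
    fix e :: real assume "e > 0"
    then have "P (min (e/2) (1/2)) \<in> Omega k" "dist (P (min (e/2) (1/2))) 0 < e"
      by (simp_all add: PO) (simp add: P_def)
    then show "\<exists>y\<in>Omega k. dist y 0 < e" by blast
  qed
  then have bound: "t powr a - t \<le> C * t powr \<alpha>" if "0 < t" "t < 1" for t
  proof -
    have "\<bar>wfun_ab k a b (P t) - wfun_ab k a b 0\<bar> \<le> C * norm (P t - 0) powr \<alpha>"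
      by (rule C) (use PO[OF that] \<open>0 \<in> closure (Omega k)\<close> closure_subset in auto)
    then show ?thesis using that unfolding wP w0 by (simp add: P_def)
  qed
  have "((\<lambda>t::real. 1 - t powr (1-a) - C * t powr (\<alpha>-a)) \<longlongrightarrow> 1 - 0 - C * 0) (at_right 0)"
    using a al
    by (intro tendsto_intros tendsto_zero_powrI[OF tendsto_ident_at tendsto_const])
       (auto intro: eventually_mono[OF eventually_at_right_less])
  then have "eventually (\<lambda>t::real. 0 < 1 - t powr (1-a) - C * t powr (\<alpha>-a)) (at_right 0)"
    by (rule order_tendstoD) simp
  moreover have "eventually (\<lambda>t::real. t < 1) (at_right 0)"
    by (rule order_tendstoD(2)[OF tendsto_ident_at]) simp
  ultimately have "eventually (\<lambda>t::real. 0 < 1 - t powr (1-a) - C * t powr (\<alpha>-a) \<and> t < 1 \<and> 0 < t)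
      (at_right 0)"
    using eventually_at_right_less[of "0::real"] by eventually_elim auto
  then obtain t :: real where t: "0 < 1 - t powr (1-a) - C * t powr (\<alpha>-a)" "t < 1" "0 < t"
    using eventually_happens[of _ "at_right (0::real)"] by auto
  have "0 < t powr a * (1 - t powr (1-a) - C * t powr (\<alpha>-a))"
    using t by simp
  also have "\<dots> = t powr a - t - C * t powr \<alpha>"
    using t by (simp add: algebra_simps powr_add[symmetric])
  finally show False using bound[OF t(3,2)] by simp
qed

theorem lemma3p1:
  fixes k :: "'n::finite" and p :: real
  assumes "CARD('n) \<ge> 2" and "0 < p" and "p < real CARD('n)"
  shows "smooth_on (Omega k) (wfun k p)
       \<and> convex_on (Omega k) (wfun k p)
       \<and> continuous_on (closure (Omega k)) (wfun k p)
       \<and> (\<forall>x\<in>frontier (Omega k). wfun k p x = 0)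
       \<and> (\<lambda>x. det (hessian (wfun k p) x)) absolutely_integrable_on (Omega k)
       \<and> (\<forall>\<alpha>. \<alpha> > 2 / (real CARD('n) + p) \<longrightarrow> \<not> holder_on \<alpha> (closure (Omega k)) (wfun k p))"
proof -
  define N where "N = real CARD('n)"
  define a where "a = 2 / (N + p)"
  define b where "b = (N + p - 2) / (N + p)"
  have Np: "N + p > 2" using assms by (simp add: N_def)
  have a: "0 < a" "a < 1" and b: "0 < b" using Np by (simp_all add: a_def b_def)
  have ab: "a + b = 1" using Np unfolding a_def b_def by (simp flip: add_divide_distrib)
  have Na: "N * a > 1" using assms Np by (simp add: N_def a_def field_simps)
  have w: "wfun k p = wfun_ab k a b"
    by (simp add: wfun_def wfun_ab_def a_def b_def N_def fun_eq_iff)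
  have "\<not> holder_on \<alpha> (closure (Omega k)) (wfun_ab k a b)" if "\<alpha> > 2 / (real CARD('n) + p)" for \<alpha>
    using that by (intro not_holder_wfun_ab[OF a]) (simp add: a_def N_def)
  then show ?thesis
    unfolding w
    using smooth_on_wfun_ab convex_on_wfun_ab[OF a(1) b ab] continuous_on_closure_wfun_ab[OF a(1) b]
      wfun_ab_frontier[OF a(1) b ab] absolutely_integrable_det_hessian_wfun_ab[OF a ab Na[unfolded N_def]]
    by blast
qed

end
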